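(* Let $k\ge 1$. If there exists a (randomized) online algorithm for the Hydra game on the $k$-factorial tree whose total (expected) cost is at most $R$ against every adversary, then there exists a (randomized) $(R+1)$-competitive online algorithm for the generalized $k$-server problem in uniform metrics.
   Context: Hydra game: played between an online algorithm and an oblivious adversary on a fixed rooted unweighted tree $T$ known in advance. Each node is asleep, alive, or dead; initially the root is alive and all others asleep. In each step the adversary picks an alive node, makes it dead and makes all its children alive. The algorithm must always be at an alive node (initially the root); if its node is killed it moves to an alive node, paying the shortest-path distance in $T$. The game ends when all nodes but one are dead; the cost is the total movement. The $k$-factorial tree is the rooted tree of height $k$ (root at level $k$, leaves at level $0$) in which every node at level $d$ has exactly $d$ children. Generalized $k$-server problem in uniform metrics: given uniform metric spaces $M_1,\dots,M_k$, where $M_i$ has $n_i\ge 2$ points at pairwise distance $1$, server $s_i$ starts at a fixed point of $M_i$ and always stays in $M_i$. Requests arrive online as $k$-tuples $(r_1,\dots,r_k)\in\prod_i M_i$; to serve a request an algorithm moves servers so that $s_i$ is at $r_i$ for at least one $i$, before seeing the next request. The cost is the total distance traveled by all servers. A randomized online algorithm $\mathrm{ALG}$ is $\beta$-competitive if there is a constant $\gamma$ (possibly depending on $k$ and the metrics but not on the request sequence) such that for every input $I$, $\mathbf{E}[\mathrm{ALG}(I)]\le \beta\cdot \mathrm{OPT}(I)+\gamma$, where $\mathrm{OPT}(I)$ is the optimal offline cost. *)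

theory Defs
  imports "HOL-Probability.Probability"
begin

definition path_cost :: "('a \<Rightarrow> 'a \<Rightarrow> nat) \<Rightarrow> 'a list \<Rightarrow> nat" where
  "path_cost d xs = sum_list (map2 d xs (tl xs))"

text \<open>Nodes are encoded by their path from the root: the list of child indices.
  A node at depth j is at level k - j and has exactly k - j children, indexed 0..k-j-1.\<close>
definition ftree :: "nat \<Rightarrow> nat list set" where
  "ftree k = {xs. length xs \<le> k \<and> (\<forall>j < length xs. xs ! j < k - j)}"

definition fchildren :: "nat \<Rightarrow> nat list \<Rightarrow> nat list set" where
  "fchildren k v = {v @ [a] | a. a < k - length v}"

fun lcp_len :: "nat list \<Rightarrow> nat list \<Rightarrow> nat" where
  "lcp_len (x # xs) (y # ys) = (if x = y then Suc (lcp_len xs ys) else 0)"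
| "lcp_len _ _ = 0"

text \<open>Shortest-path distance in the (unweighted) tree: up to the lowest common ancestor and down.\<close>
definition tdist :: "nat list \<Rightarrow> nat list \<Rightarrow> nat" where
  "tdist u v = length u + length v - 2 * lcp_len u v"

definition alive_after :: "nat \<Rightarrow> nat list list \<Rightarrow> nat list set" where
  "alive_after k ks = foldl (\<lambda>A v. (A - {v}) \<union> fchildren k v) {[]} ks"

definition valid_kills :: "nat \<Rightarrow> nat list list \<Rightarrow> bool" where
  "valid_kills k ks = (\<forall>j < length ks. ks ! j \<in> alive_after k (take j ks))"

text \<open>An (oblivious) adversary: a complete legal play, i.e. until all nodes but one are dead.\<close>
definition hydra_adversary :: "nat \<Rightarrow> nat list list \<Rightarrow> bool" where
  "hydra_adversary k ks = (valid_kills k ks \<and> length ks = card (ftree k) - 1)"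

text \<open>A randomized online Hydra algorithm (behavioural strategy): given the kills so far
  (the last of which killed the algorithm's node) and its own positions so far, it chooses
  (randomly) the node to move to; this must be an alive node.\<close>
type_synonym hydra_alg = "nat list list \<Rightarrow> nat list list \<Rightarrow> nat list pmf"

definition valid_hydra_alg :: "nat \<Rightarrow> hydra_alg \<Rightarrow> bool" where
  "valid_hydra_alg k H = (\<forall>ks ps. valid_kills k ks \<and> ks \<noteq> [] \<and> alive_after k ks \<noteq> {}
       \<longrightarrow> set_pmf (H ks ps) \<subseteq> alive_after k ks)"

text \<open>Arguments: kills so far, own positions so far (starting with the root), remaining kills.\<close>
fun hydra_run :: "hydra_alg \<Rightarrow> nat list list \<Rightarrow> nat list list \<Rightarrow> nat list list
                    \<Rightarrow> nat list list pmf" where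
  "hydra_run H past ps [] = return_pmf []"
| "hydra_run H past ps (v # vs) =
     (if v = last ps then
        bind_pmf (H (past @ [v]) ps) (\<lambda>p.
          map_pmf (\<lambda>rest. p # rest) (hydra_run H (past @ [v]) (ps @ [p]) vs))
      else
        map_pmf (\<lambda>rest. last ps # rest) (hydra_run H (past @ [v]) (ps @ [last ps]) vs))"

definition hydra_exp_cost :: "hydra_alg \<Rightarrow> nat list list \<Rightarrow> real" where
  "hydra_exp_cost H ks =
     measure_pmf.expectation (hydra_run H [] [[]] ks) (\<lambda>ps. real (path_cost tdist ([] # ps)))"

text \<open>Metric M_i = {0..<n i} with the uniform metric. Configurations and requests are
  lists of length k whose i-th entry lies in M_i.\<close>
definition gks_point :: "nat \<Rightarrow> (nat \<Rightarrow> nat) \<Rightarrow> nat list \<Rightarrow> bool" where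
  "gks_point k n c = (length c = k \<and> (\<forall>i < k. c ! i < n i))"

definition gks_serves :: "nat \<Rightarrow> nat list \<Rightarrow> nat list \<Rightarrow> bool" where
  "gks_serves k c r = (\<exists>i < k. c ! i = r ! i)"

definition gks_dist :: "nat \<Rightarrow> nat list \<Rightarrow> nat list \<Rightarrow> nat" where
  "gks_dist k c c' = card {i. i < k \<and> c ! i \<noteq> c' ! i}"

text \<open>A randomized online algorithm (behavioural strategy): given the requests so far
  (including the current one) and its previous configurations (starting with the initial
  one), it chooses (randomly) its new configuration, which must serve the current request.\<close>
type_synonym gks_alg = "nat list list \<Rightarrow> nat list list \<Rightarrow> nat list pmf"

definition valid_gks_alg :: "nat \<Rightarrow> (nat \<Rightarrow> nat) \<Rightarrow> gks_alg \<Rightarrow> bool" where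
  "valid_gks_alg k n A = (\<forall>rs cs. rs \<noteq> [] \<and> (\<forall>r \<in> set rs. gks_point k n r) \<longrightarrow>
       set_pmf (A rs cs) \<subseteq> {c. gks_point k n c \<and> gks_serves k c (last rs)})"

fun gks_run :: "gks_alg \<Rightarrow> nat list list \<Rightarrow> nat list list \<Rightarrow> nat list list
                  \<Rightarrow> nat list list pmf" where
  "gks_run A past cs [] = return_pmf []"
| "gks_run A past cs (r # rs) =
     bind_pmf (A (past @ [r]) cs) (\<lambda>c.
       map_pmf (\<lambda>rest. c # rest) (gks_run A (past @ [r]) (cs @ [c]) rs))"

definition gks_exp_cost :: "nat \<Rightarrow> gks_alg \<Rightarrow> nat list \<Rightarrow> nat list list \<Rightarrow> real" where
  "gks_exp_cost k A c0 I =
     measure_pmf.expectation (gks_run A [] [c0] I) (\<lambda>cs. real (path_cost (gks_dist k) (c0 # cs)))"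

definition gks_opt :: "nat \<Rightarrow> (nat \<Rightarrow> nat) \<Rightarrow> nat list \<Rightarrow> nat list list \<Rightarrow> nat" where
  "gks_opt k n c0 I =
     (INF cs \<in> {cs. length cs = length I \<and>
                    (\<forall>j < length I. gks_point k n (cs ! j) \<and> gks_serves k (cs ! j) (I ! j))}.
        path_cost (gks_dist k) (c0 # cs))"

definition gks_competitive ::
  "nat \<Rightarrow> (nat \<Rightarrow> nat) \<Rightarrow> nat list \<Rightarrow> gks_alg \<Rightarrow> real \<Rightarrow> bool" where
  "gks_competitive k n c0 A \<beta> =
     (\<exists>\<gamma>::real. \<forall>I. (\<forall>r \<in> set I. gks_point k n r) \<longrightarrow>
        gks_exp_cost k A c0 I \<le> \<beta> * real (gks_opt k n c0 I) + \<gamma>)"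

end

theory Submission
  imports Defs
begin

text \<open>
  Identify a node of the k-factorial tree at depth j with an ordered choice of j distinct
  coordinates: the a-th child of a node fixes the a-th coordinate not yet fixed by its
  ancestors. During a phase every node carries values for its fixed coordinates, and its
  configuration takes the remaining coordinates from the configuration b at the start of the
  phase; along a tree path the configuration changes at most once per edge, so following the
  Hydra algorithm's node costs no more than the Hydra algorithm itself.
  A request r kills precisely the alive nodes whose labelled coordinates all disagree with r;
  their children fix one new coordinate to the value requested by r, so the configuration of
  every alive node serves r. When a request would kill every alive node, a new phase starts.
  The kills of one phase extend to a complete Hydra adversary, so a phase costs at most R.
  An offline configuration agreeing with the labels of some alive node stays so until it moves,
  and no phase can end while it does; hence each restart costs the optimum at least 1, and the
  total cost is at most R (number of restarts + 1), which is at most R OPT + R.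
  Since online algorithms are given only their own past configurations, the randomised
  simulation state is recovered by conditioning on them.
\<close>

definition fchildren_set :: "nat \<Rightarrow> nat list set \<Rightarrow> nat list set" where
  "fchildren_set k S = (\<Union>v\<in>S. fchildren k v)"

definition ever_alive :: "nat \<Rightarrow> nat list list \<Rightarrow> nat list set" where
  "ever_alive k ks = insert [] (set ks \<union> fchildren_set k (set ks))"

lemma alive_after_Nil [simp]: "alive_after k [] = {[]}"
  by (simp add: alive_after_def)

lemma alive_after_snoc: "alive_after k (ks @ [v]) = (alive_after k ks - {v}) \<union> fchildren k v"
  by (simp add: alive_after_def)

lemma valid_kills_Nil [simp]: "valid_kills k []"
  by (simp add: valid_kills_def)

lemma valid_kills_snoc:
  "valid_kills k (ks @ [v]) \<longleftrightarrow> valid_kills k ks \<and> v \<in> alive_after k ks"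
  by (auto simp: valid_kills_def nth_append less_Suc_eq dest: spec[of _ "length ks"])

lemma valid_kills_appendD: "valid_kills k (ks @ ys) \<Longrightarrow> valid_kills k ks"
  by (induction ys rule: rev_induct) (simp_all add: valid_kills_snoc flip: append_assoc)

lemma valid_kills_append_hd:
  assumes "valid_kills k (ks @ ys)" "ys \<noteq> []"
  shows "hd ys \<in> alive_after k ks"
proof -
  have "valid_kills k ((ks @ [hd ys]) @ tl ys)" using assms by simp
  then have "valid_kills k (ks @ [hd ys])" by (rule valid_kills_appendD)
  then show ?thesis by (simp add: valid_kills_snoc)
qed

lemma mem_fchildren_set_iff:
  "u \<in> fchildren_set k S \<longleftrightarrow> u \<noteq> [] \<and> butlast u \<in> S \<and> last u < k - length (butlast u)"
proof
  assume "u \<noteq> [] \<and> butlast u \<in> S \<and> last u < k - length (butlast u)"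
  moreover from this have "u = butlast u @ [last u]" by simp
  ultimately show "u \<in> fchildren_set k S"
    unfolding fchildren_set_def fchildren_def by blast
qed (auto simp: fchildren_set_def fchildren_def)

lemma fchildren_set_union: "fchildren_set k (A \<union> B) = fchildren_set k A \<union> fchildren_set k B"
  by (auto simp: fchildren_set_def)

lemma fchildren_set_insert: "fchildren_set k (insert v A) = fchildren k v \<union> fchildren_set k A"
  by (auto simp: fchildren_set_def)

lemma Nil_in_ftree [simp]: "[] \<in> ftree k"
  by (simp add: ftree_def)

lemma snoc_in_ftree_iff: "w @ [a] \<in> ftree k \<longleftrightarrow> w \<in> ftree k \<and> a < k - length w"
  by (auto simp: ftree_def nth_append less_Suc_eq)

lemma fchildren_set_subset_ftree: "S \<subseteq> ftree k \<Longrightarrow> fchildren_set k S \<subseteq> ftree k"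
  by (auto simp: fchildren_set_def fchildren_def snoc_in_ftree_iff)

lemma finite_ftree: "finite (ftree k)"
proof (rule finite_subset)
  show "ftree k \<subseteq> {xs. set xs \<subseteq> {..<k} \<and> length xs \<le> k}"
    by (force simp: ftree_def in_set_conv_nth)
  show "finite {xs. set xs \<subseteq> {..<k} \<and> length xs \<le> k}"
    by (rule finite_lists_length_le) simp
qed

lemma valid_kills_structure:
  assumes "valid_kills k ks"
  shows "alive_after k ks = insert [] (fchildren_set k (set ks)) - set ks \<and> distinct ks
    \<and> (\<forall>u \<in> set ks. u \<noteq> [] \<longrightarrow> butlast u \<in> set ks) \<and> set ks \<subseteq> ftree k"
  using assms
proof (induction ks rule: rev_induct)
  case Nil
  then show ?case by (simp add: fchildren_set_def)
next
  case (snoc v ks)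
  then have alive: "alive_after k ks = insert [] (fchildren_set k (set ks)) - set ks"
    and IH: "distinct ks" "\<forall>u \<in> set ks. u \<noteq> [] \<longrightarrow> butlast u \<in> set ks" "set ks \<subseteq> ftree k"
    and v: "v \<in> alive_after k ks"
    by (auto simp: valid_kills_snoc)
  have v_new: "v \<notin> set ks" and v_parent: "v \<noteq> [] \<Longrightarrow> butlast v \<in> set ks"
    using v alive by (auto simp: mem_fchildren_set_iff)
  have "v \<in> ftree k"
    using v alive fchildren_set_subset_ftree[OF IH(3)] by auto
  moreover have "fchildren k v \<inter> insert v (set ks) = {}"
    using v_new IH(2) by (force simp: fchildren_def)
  then have "alive_after k (ks @ [v]) = insert [] (fchildren_set k (set (ks @ [v]))) - set (ks @ [v])"
    using alive by (auto simp: alive_after_snoc fchildren_set_insert)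
  ultimately show ?case
    using IH v_new v_parent by auto
qed

lemma alive_after_eq:
  "valid_kills k ks \<Longrightarrow> alive_after k ks = insert [] (fchildren_set k (set ks)) - set ks"
  using valid_kills_structure by blast

lemma distinct_valid_kills: "valid_kills k ks \<Longrightarrow> distinct ks"
  using valid_kills_structure by blast

lemma butlast_killed: "valid_kills k ks \<Longrightarrow> u \<in> set ks \<Longrightarrow> u \<noteq> [] \<Longrightarrow> butlast u \<in> set ks"
  using valid_kills_structure by blast

lemma killed_subset_ftree: "valid_kills k ks \<Longrightarrow> set ks \<subseteq> ftree k"
  using valid_kills_structure by blast

lemma alive_subset_ever_alive: "valid_kills k ks \<Longrightarrow> alive_after k ks \<subseteq> ever_alive k ks"
  by (auto simp: alive_after_eq ever_alive_def)

lemma ever_alive_mono: "ever_alive k ks \<subseteq> ever_alive k (ks @ ys)"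
  by (auto simp: ever_alive_def fchildren_set_union)

lemma ever_alive_subset_ftree: "valid_kills k ks \<Longrightarrow> ever_alive k ks \<subseteq> ftree k"
  using killed_subset_ftree[of k ks] fchildren_set_subset_ftree[of "set ks" k]
  by (simp add: ever_alive_def)

lemma finite_alive_after: "valid_kills k ks \<Longrightarrow> finite (alive_after k ks)"
  by (meson alive_subset_ever_alive ever_alive_subset_ftree finite_ftree finite_subset)

lemma alive_after_subset_ftree: "valid_kills k ks \<Longrightarrow> alive_after k ks \<subseteq> ftree k"
  using alive_subset_ever_alive ever_alive_subset_ftree by blast

lemma butlast_ever_alive:
  "valid_kills k ks \<Longrightarrow> w \<in> ever_alive k ks \<Longrightarrow> w \<noteq> [] \<Longrightarrow> butlast w \<in> set ks"
  by (auto simp: ever_alive_def mem_fchildren_set_iff dest: butlast_killed)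

lemma take_ever_alive:
  assumes "valid_kills k ks" "w \<in> ever_alive k ks"
  shows "take j w \<in> ever_alive k ks"
  using assms(2)
proof (induction w rule: rev_induct)
  case (snoc a w)
  then have "w \<in> ever_alive k ks"
    using butlast_ever_alive[OF assms(1)] by (fastforce simp: ever_alive_def)
  with snoc show ?case
    by (cases "j \<le> length w") auto
qed simp

lemma valid_kills_append_alive:
  assumes "valid_kills k ks" "set K \<subseteq> alive_after k ks" "distinct K"
  shows "valid_kills k (ks @ K)"
  using assms(2,3)
proof (induction K rule: rev_induct)
  case (snoc v K)
  then have valid: "valid_kills k (ks @ K)" by simp
  have "v \<in> alive_after k ks" "v \<notin> set K" using snoc.prems by auto
  then have "v \<in> alive_after k (ks @ K)"
    using alive_after_eq[OF valid] alive_after_eq[OF assms(1)] by (auto simp: fchildren_set_union)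
  with valid show ?case using valid_kills_snoc[of k "ks @ K" v] by simp
qed (simp add: assms(1))

lemma alive_after_append_alive:
  assumes "valid_kills k ks" "set K \<subseteq> alive_after k ks" "distinct K"
  shows "alive_after k (ks @ K) = (alive_after k ks - set K) \<union> fchildren_set k (set K)"
proof -
  have alive: "alive_after k ks = insert [] (fchildren_set k (set ks)) - set ks"
    using alive_after_eq[OF assms(1)] .
  have "fchildren_set k (set K) \<inter> (set ks \<union> set K) = {}"
    using alive assms(2) butlast_killed[OF assms(1)]
    by (fastforce simp: mem_fchildren_set_iff)
  then show ?thesis
    using alive_after_eq[OF valid_kills_append_alive[OF assms]] alive
    by (auto simp: fchildren_set_union)
qed

lemma ftree_subset_killed_if_no_alive:
  assumes "valid_kills k ks" "alive_after k ks = {}"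
  shows "ftree k \<subseteq> set ks"
proof
  fix w assume "w \<in> ftree k"
  then show "w \<in> set ks"
  proof (induction w rule: rev_induct)
    case Nil
    then show ?case using assms alive_after_eq[OF assms(1)] by auto
  next
    case (snoc a w)
    then have "w \<in> set ks" and "a < k - length w" by (simp_all add: snoc_in_ftree_iff)
    then have "w @ [a] \<in> fchildren_set k (set ks)"
      by (simp add: mem_fchildren_set_iff)
    then show ?case using assms alive_after_eq[OF assms(1)] by auto
  qed
qed

lemma card_ftree_le_if_no_alive:
  assumes "valid_kills k ks" "alive_after k ks = {}"
  shows "card (ftree k) \<le> length ks"
  using card_mono[OF _ ftree_subset_killed_if_no_alive[OF assms]] card_length[of ks] by simp

lemma length_kills_less_card_ftree:
  assumes "valid_kills k ks" "alive_after k ks \<noteq> {}"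
  shows "length ks < card (ftree k)"
proof -
  obtain a where "a \<in> alive_after k ks" using assms(2) by blast
  then have "a \<in> ftree k - set ks"
    using alive_after_eq[OF assms(1)] alive_after_subset_ftree[OF assms(1)] by auto
  then have "set ks \<subset> ftree k" using killed_subset_ftree[OF assms(1)] by blast
  then have "card (set ks) < card (ftree k)" by (rule psubset_card_mono[OF finite_ftree])
  then show ?thesis by (simp add: distinct_card[OF distinct_valid_kills[OF assms(1)]])
qed

lemma hydra_adversary_extension:
  assumes "valid_kills k ks" "alive_after k ks \<noteq> {}"
  shows "\<exists>M. hydra_adversary k (ks @ M)"
  using assms
proof (induction "card (ftree k) - length ks" arbitrary: ks rule: less_induct)
  case less
  show ?case
  proof (cases "length ks = card (ftree k) - 1")
    case True
    then show ?thesis by (intro exI[of _ "[]"]) (simp add: hydra_adversary_def less.prems)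
  next
    case False
    with length_kills_less_card_ftree[OF less.prems]
    have short: "Suc (length ks) < card (ftree k)" by linarith
    obtain v where "v \<in> alive_after k ks" using less.prems by blast
    then have valid: "valid_kills k (ks @ [v])" using less.prems by (simp add: valid_kills_snoc)
    have alive: "alive_after k (ks @ [v]) \<noteq> {}"
    proof
      assume "alive_after k (ks @ [v]) = {}"
      from card_ftree_le_if_no_alive[OF valid this] short show False by simp
    qed
    have "\<exists>M. hydra_adversary k ((ks @ [v]) @ M)"
      by (rule less.hyps) (use short valid alive in auto)
    then show ?thesis by (metis append.assoc append_Cons append_Nil)
  qed
qed

lemma hydra_adversary_alive:
  assumes "hydra_adversary k M"
  shows "valid_kills k M" "alive_after k M \<noteq> {}"
proof -
  show valid: "valid_kills k M" using assms by (simp add: hydra_adversary_def)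
  show "alive_after k M \<noteq> {}"
  proof
    assume "alive_after k M = {}"
    from card_ftree_le_if_no_alive[OF valid this] have "card (ftree k) \<le> length M" .
    moreover have "card (ftree k) > 0" by (metis card_gt_0_iff empty_iff finite_ftree Nil_in_ftree)
    ultimately show False using assms by (simp add: hydra_adversary_def)
  qed
qed


section \<open>Nodes as partial configurations\<close>

definition free_coords :: "nat \<Rightarrow> nat list \<Rightarrow> nat list" where
  "free_coords k L = filter (\<lambda>i. i \<notin> set L) [0..<k]"

definition node_coords :: "nat \<Rightarrow> nat list \<Rightarrow> nat list" where
  "node_coords k v = foldl (\<lambda>L a. L @ [free_coords k L ! a]) [] v"

definition node_config ::
  "nat \<Rightarrow> nat list \<Rightarrow> (nat list \<Rightarrow> nat \<Rightarrow> nat) \<Rightarrow> nat list \<Rightarrow> nat list" where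
  "node_config k b lab w =
     map (\<lambda>i. if i \<in> set (node_coords k w) then lab w i else b ! i) [0..<k]"

lemma node_coords_Nil [simp]: "node_coords k [] = []"
  by (simp add: node_coords_def)

lemma node_coords_snoc:
  "node_coords k (v @ [a]) = node_coords k v @ [free_coords k (node_coords k v) ! a]"
  by (simp add: node_coords_def)

lemma length_node_coords [simp]: "length (node_coords k v) = length v"
  by (induction v rule: rev_induct) (simp_all add: node_coords_snoc)

lemma node_coords_take: "node_coords k (take j w) = take j (node_coords k w)"
proof (induction w rule: rev_induct)
  case (snoc a w)
  then show ?case by (cases "j \<le> length w") (simp_all add: node_coords_snoc)
qed simp

lemma set_free_coords: "set (free_coords k L) = {..<k} - set L"
  by (auto simp: free_coords_def)

lemma length_free_coords:
  assumes "distinct L" "set L \<subseteq> {..<k}"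
  shows "length (free_coords k L) = k - length L"
proof -
  have "length (free_coords k L) = card ({..<k} - set L)"
    by (simp add: free_coords_def distinct_card[symmetric] flip: set_free_coords)
  also have "\<dots> = k - length L"
    using assms by (simp add: card_Diff_subset distinct_card)
  finally show ?thesis .
qed

lemma node_coords_ftree:
  "v \<in> ftree k \<Longrightarrow> distinct (node_coords k v) \<and> set (node_coords k v) \<subseteq> {..<k}"
proof (induction v rule: rev_induct)
  case (snoc a v)
  then have IH: "distinct (node_coords k v) \<and> set (node_coords k v) \<subseteq> {..<k}"
    and "a < length (free_coords k (node_coords k v))"
    by (simp_all add: snoc_in_ftree_iff length_free_coords)
  then have "free_coords k (node_coords k v) ! a \<in> {..<k} - set (node_coords k v)"
    by (metis nth_mem set_free_coords)
  with IH show ?case by (auto simp: node_coords_snoc)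
qed simp

lemma node_coords_lessThan: "v \<in> ftree k \<Longrightarrow> i \<in> set (node_coords k v) \<Longrightarrow> i < k"
  using node_coords_ftree by blast

lemma new_coord_snoc:
  assumes "v \<in> ftree k" "a < k - length v"
  shows "last (node_coords k (v @ [a])) \<in> {..<k} - set (node_coords k v)"
proof -
  have "a < length (free_coords k (node_coords k v))"
    using assms node_coords_ftree[OF assms(1)] by (simp add: length_free_coords)
  then show ?thesis by (metis last_snoc node_coords_snoc nth_mem set_free_coords)
qed

lemma free_coord_child:
  assumes "v \<in> ftree k" "i < k" "i \<notin> set (node_coords k v)"
  obtains a where "a < k - length v" "node_coords k (v @ [a]) = node_coords k v @ [i]"
proof -
  have "i \<in> set (free_coords k (node_coords k v))"
    using assms by (simp add: set_free_coords)
  then obtain a where "a < length (free_coords k (node_coords k v))"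
    "free_coords k (node_coords k v) ! a = i"
    by (auto simp: in_set_conv_nth)
  with node_coords_ftree[OF assms(1)] show ?thesis
    by (intro that) (simp_all add: length_free_coords node_coords_snoc)
qed

lemma length_node_config [simp]: "length (node_config k b lab w) = k"
  by (simp add: node_config_def)

lemma nth_node_config:
  "i < k \<Longrightarrow> node_config k b lab w ! i = (if i \<in> set (node_coords k w) then lab w i else b ! i)"
  by (simp add: node_config_def)

lemma node_config_Nil: "length b = k \<Longrightarrow> node_config k b lab [] = b"
  by (simp add: node_config_def) (metis map_nth)

lemma gks_dist_triangle: "gks_dist k x z \<le> gks_dist k x y + gks_dist k y z"
proof -
  have "gks_dist k x z \<le> card ({i. i < k \<and> x ! i \<noteq> y ! i} \<union> {i. i < k \<and> y ! i \<noteq> z ! i})"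
    unfolding gks_dist_def by (rule card_mono) auto
  also have "\<dots> \<le> gks_dist k x y + gks_dist k y z"
    unfolding gks_dist_def by (rule card_Un_le)
  finally show ?thesis .
qed

lemma gks_dist_le: "gks_dist k x y \<le> k"
  using card_mono[of "{..<k}" "{i. i < k \<and> x ! i \<noteq> y ! i}"] by (auto simp: gks_dist_def)

text \<open>Under prefix consistency two node configurations differ only in coordinates fixed
  below the lowest common ancestor, at most one per tree edge.\<close>

definition prefix_consistent :: "nat \<Rightarrow> (nat list \<Rightarrow> nat \<Rightarrow> nat) \<Rightarrow> nat list set \<Rightarrow> bool" where
  "prefix_consistent k lab C = (\<forall>w \<in> C. \<forall>j \<le> length w.
     \<forall>i \<in> set (node_coords k (take j w)). lab (take j w) i = lab w i)"

lemma node_config_take_diff: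
  assumes "prefix_consistent k lab C" "w \<in> C" "j \<le> length w"
  shows "{i. i < k \<and> node_config k b lab (take j w) ! i \<noteq> node_config k b lab w ! i}
           \<subseteq> set (drop j (node_coords k w))"
proof -
  have split: "set (node_coords k w) = set (node_coords k (take j w)) \<union> set (drop j (node_coords k w))"
    by (metis node_coords_take append_take_drop_id set_append)
  have inherited: "lab (take j w) i = lab w i" if "i \<in> set (node_coords k (take j w))" for i
    using assms that by (auto simp: prefix_consistent_def)
  show ?thesis using split by (auto simp: nth_node_config inherited split: if_splits)
qed

lemma lcp_len_le: "lcp_len u v \<le> length u \<and> lcp_len u v \<le> length v"
  by (induction u v rule: lcp_len.induct) auto

lemma take_lcp_len: "take (lcp_len u v) u = take (lcp_len u v) v"
  by (induction u v rule: lcp_len.induct) auto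

lemma gks_dist_node_config_le_tdist:
  assumes "prefix_consistent k lab C" "u \<in> C" "v \<in> C"
  shows "gks_dist k (node_config k b lab u) (node_config k b lab v) \<le> tdist u v"
proof -
  let ?l = "lcp_len u v"
  let ?D = "\<lambda>w. set (drop ?l (node_coords k w))"
  let ?c = "node_config k b lab" and ?a = "node_config k b lab (take ?l u)"
  have "{i. i < k \<and> ?c u ! i \<noteq> ?c v ! i}
          \<subseteq> {i. i < k \<and> ?a ! i \<noteq> ?c u ! i} \<union> {i. i < k \<and> ?a ! i \<noteq> ?c v ! i}"
    by auto
  also have "\<dots> \<subseteq> ?D u \<union> ?D v"
    using node_config_take_diff[OF assms(1,2), of ?l b] node_config_take_diff[OF assms(1,3), of ?l b]
      lcp_len_le[of u v] take_lcp_len[of u v]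
    by auto
  finally have "{i. i < k \<and> ?c u ! i \<noteq> ?c v ! i} \<subseteq> ?D u \<union> ?D v" .
  then have "gks_dist k (node_config k b lab u) (node_config k b lab v) \<le> card (?D u \<union> ?D v)"
    unfolding gks_dist_def by (rule card_mono[rotated]) simp
  also have "\<dots> \<le> card (?D u) + card (?D v)" by (rule card_Un_le)
  also have "\<dots> \<le> length (drop ?l (node_coords k u)) + length (drop ?l (node_coords k v))"
    by (intro add_mono card_length)
  also have "\<dots> = tdist u v" using lcp_len_le[of u v] by (simp add: tdist_def)
  finally show ?thesis .
qed


definition node_fails :: "nat \<Rightarrow> (nat list \<Rightarrow> nat \<Rightarrow> nat) \<Rightarrow> nat list \<Rightarrow> nat list \<Rightarrow> bool" where
  "node_fails k lab v r = (\<forall>i \<in> set (node_coords k v). lab v i \<noteq> r ! i)"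

definition kill_batch ::
  "nat \<Rightarrow> (nat list \<Rightarrow> nat \<Rightarrow> nat) \<Rightarrow> nat list list \<Rightarrow> nat list \<Rightarrow> nat list list" where
  "kill_batch k lab ks r =
     (SOME l. distinct l \<and> set l = {v \<in> alive_after k ks. node_fails k lab v r})"

definition relabel ::
  "nat \<Rightarrow> (nat list \<Rightarrow> nat \<Rightarrow> nat) \<Rightarrow> nat list list \<Rightarrow> nat list \<Rightarrow> nat list \<Rightarrow> nat \<Rightarrow> nat" where
  "relabel k lab ks r w =
     (if w \<noteq> [] \<and> butlast w \<in> set (kill_batch k lab ks r)
      then (lab (butlast w))(last (node_coords k w) := r ! last (node_coords k w))
      else lab w)"

definition phase_ends :: "nat \<Rightarrow> (nat list \<Rightarrow> nat \<Rightarrow> nat) \<Rightarrow> nat list list \<Rightarrow> nat list \<Rightarrow> bool" where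
  "phase_ends k lab ks r = (alive_after k (ks @ kill_batch k lab ks r) = {})"

definition covered :: "nat \<Rightarrow> (nat list \<Rightarrow> nat \<Rightarrow> nat) \<Rightarrow> nat list list \<Rightarrow> nat list \<Rightarrow> bool" where
  "covered k lab ks c = (\<exists>w \<in> alive_after k ks. \<forall>i \<in> set (node_coords k w). c ! i = lab w i)"

definition phase_inv :: "nat \<Rightarrow> (nat \<Rightarrow> nat) \<Rightarrow> (nat list \<Rightarrow> nat \<Rightarrow> nat) \<Rightarrow> nat list list \<Rightarrow> bool" where
  "phase_inv k n lab ks = (valid_kills k ks \<and> alive_after k ks \<noteq> {}
     \<and> prefix_consistent k lab (ever_alive k ks)
     \<and> (\<forall>w \<in> ever_alive k ks. \<forall>i \<in> set (node_coords k w). lab w i < n i))"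

lemma kill_batch:
  assumes "valid_kills k ks"
  shows "distinct (kill_batch k lab ks r)"
    and "set (kill_batch k lab ks r) = {v \<in> alive_after k ks. node_fails k lab v r}"
proof -
  have "finite {v \<in> alive_after k ks. node_fails k lab v r}"
    using finite_alive_after[OF assms] by simp
  then have "\<exists>l. distinct l \<and> set l = {v \<in> alive_after k ks. node_fails k lab v r}"
    using finite_distinct_list by blast
  then have "distinct (kill_batch k lab ks r)
      \<and> set (kill_batch k lab ks r) = {v \<in> alive_after k ks. node_fails k lab v r}"
    unfolding kill_batch_def by (rule someI_ex)
  then show "distinct (kill_batch k lab ks r)"
    and "set (kill_batch k lab ks r) = {v \<in> alive_after k ks. node_fails k lab v r}"
    by simp_all
qed

lemma kill_batch_subset_alive: "valid_kills k ks \<Longrightarrow> set (kill_batch k lab ks r) \<subseteq> alive_after k ks"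
  by (simp add: kill_batch)

lemma valid_kills_kill_batch: "valid_kills k ks \<Longrightarrow> valid_kills k (ks @ kill_batch k lab ks r)"
  by (simp add: valid_kills_append_alive kill_batch_subset_alive kill_batch)

lemma alive_after_kill_batch:
  "valid_kills k ks \<Longrightarrow> alive_after k (ks @ kill_batch k lab ks r)
     = (alive_after k ks - set (kill_batch k lab ks r)) \<union> fchildren_set k (set (kill_batch k lab ks r))"
  by (simp add: alive_after_append_alive kill_batch_subset_alive kill_batch)

lemma ever_alive_kill_batch:
  "valid_kills k ks \<Longrightarrow> ever_alive k (ks @ kill_batch k lab ks r)
     = ever_alive k ks \<union> fchildren_set k (set (kill_batch k lab ks r))"
  using kill_batch_subset_alive[of k ks lab r] alive_subset_ever_alive[of k ks]
  by (auto simp: ever_alive_def fchildren_set_union)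

lemma relabel_ever_alive:
  assumes "valid_kills k ks" "w \<in> ever_alive k ks"
  shows "relabel k lab ks r w = lab w"
proof -
  have "butlast w \<notin> set (kill_batch k lab ks r)" if "w \<noteq> []"
    using butlast_ever_alive[OF assms that] kill_batch_subset_alive[OF assms(1)]
      alive_after_eq[OF assms(1)]
    by blast
  then show ?thesis by (auto simp: relabel_def)
qed

lemma fchildren_kill_batchE:
  assumes "valid_kills k ks" "w \<in> fchildren_set k (set (kill_batch k lab ks r))"
  obtains v a where "w = v @ [a]" "v \<in> set (kill_batch k lab ks r)" "v \<in> ever_alive k ks"
    "last (node_coords k w) \<in> {..<k} - set (node_coords k v)"
    "relabel k lab ks r w = (lab v)(last (node_coords k w) := r ! last (node_coords k w))"
proof -
  obtain v a where w: "w = v @ [a]" "v \<in> set (kill_batch k lab ks r)" "a < k - length v"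
    using assms(2) by (auto simp: fchildren_set_def fchildren_def)
  then have v: "v \<in> ever_alive k ks"
    using kill_batch_subset_alive[OF assms(1)] alive_subset_ever_alive[OF assms(1)] by blast
  then have "v \<in> ftree k" using ever_alive_subset_ftree[OF assms(1)] by blast
  then have "last (node_coords k w) \<in> {..<k} - set (node_coords k v)"
    unfolding w(1) using w(3) by (rule new_coord_snoc)
  moreover have "relabel k lab ks r w = (lab v)(last (node_coords k w) := r ! last (node_coords k w))"
    using w(1,2) by (simp add: relabel_def)
  ultimately show ?thesis using that w(1,2) v by blast
qed

lemma prefix_consistent_relabel:
  assumes valid: "valid_kills k ks" and consistent: "prefix_consistent k lab (ever_alive k ks)"
  shows "prefix_consistent k (relabel k lab ks r) (ever_alive k (ks @ kill_batch k lab ks r))"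
  unfolding prefix_consistent_def
proof (intro ballI allI impI)
  fix w j i
  assume w: "w \<in> ever_alive k (ks @ kill_batch k lab ks r)" and j: "j \<le> length w"
    and i: "i \<in> set (node_coords k (take j w))"
  let ?lab' = "relabel k lab ks r"
  show "?lab' (take j w) i = ?lab' w i"
  proof (cases "w \<in> ever_alive k ks")
    case True
    with consistent j i show ?thesis
      by (simp add: relabel_ever_alive[OF valid] take_ever_alive[OF valid] prefix_consistent_def)
  next
    case False
    with w obtain v a where new: "w = v @ [a]" "v \<in> ever_alive k ks"
      "last (node_coords k w) \<notin> set (node_coords k v)"
      "?lab' w = (lab v)(last (node_coords k w) := r ! last (node_coords k w))"
      using fchildren_kill_batchE[OF valid] by (metis DiffD2 UnE ever_alive_kill_batch[OF valid])
    show ?thesis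
    proof (cases "j = length w")
      case False
      with j new(1) have jv: "j \<le> length v" and take_w: "take j w = take j v" by simp_all
      with i have i_v: "i \<in> set (node_coords k (take j v))" by simp
      then have "i \<in> set (node_coords k v)" by (metis node_coords_take in_set_takeD)
      then have "i \<noteq> last (node_coords k w)" using new(3) by blast
      moreover have "lab (take j v) i = lab v i"
        using consistent new(2) jv i_v by (auto simp: prefix_consistent_def)
      ultimately show ?thesis
        using take_w new relabel_ever_alive[OF valid take_ever_alive[OF valid new(2)]] by simp
    qed simp
  qed
qed

lemma relabel_less:
  assumes valid: "valid_kills k ks"
    and bounded: "\<forall>w \<in> ever_alive k ks. \<forall>i \<in> set (node_coords k w). lab w i < n i"
    and r: "gks_point k n r"
    and w: "w \<in> ever_alive k (ks @ kill_batch k lab ks r)" and i: "i \<in> set (node_coords k w)"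
  shows "relabel k lab ks r w i < n i"
proof (cases "w \<in> ever_alive k ks")
  case True
  with bounded i show ?thesis by (simp add: relabel_ever_alive[OF valid])
next
  case False
  with w obtain v a where new: "w = v @ [a]" "v \<in> ever_alive k ks"
    "last (node_coords k w) \<in> {..<k}"
    "relabel k lab ks r w = (lab v)(last (node_coords k w) := r ! last (node_coords k w))"
    using fchildren_kill_batchE[OF valid] by (metis DiffD1 UnE ever_alive_kill_batch[OF valid])
  show ?thesis
  proof (cases "i = last (node_coords k w)")
    case False
    with i new(1) have "i \<in> set (node_coords k v)" by (simp add: node_coords_snoc)
    with False new bounded show ?thesis by simp
  qed (use new r in \<open>simp add: gks_point_def\<close>)
qed

lemma phase_inv_step:
  assumes "phase_inv k n lab ks" "gks_point k n r" "\<not> phase_ends k lab ks r"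
  shows "phase_inv k n (relabel k lab ks r) (ks @ kill_batch k lab ks r)"
  using assms prefix_consistent_relabel relabel_less valid_kills_kill_batch
  by (simp add: phase_inv_def phase_ends_def)

lemma alive_after_kill_batch_serves:
  assumes "valid_kills k ks" "w \<in> alive_after k (ks @ kill_batch k lab ks r)"
  shows "\<exists>i \<in> set (node_coords k w). relabel k lab ks r w i = r ! i"
  using assms(2)
  unfolding alive_after_kill_batch[OF assms(1)]
proof
  assume w: "w \<in> alive_after k ks - set (kill_batch k lab ks r)"
  then have "\<not> node_fails k lab w r" by (simp add: kill_batch[OF assms(1)])
  moreover have "w \<in> ever_alive k ks" using w alive_subset_ever_alive[OF assms(1)] by blast
  ultimately show ?thesis by (auto simp: node_fails_def relabel_ever_alive[OF assms(1)])
next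
  assume "w \<in> fchildren_set k (set (kill_batch k lab ks r))"
  then obtain v a where "w = v @ [a]"
    "relabel k lab ks r w = (lab v)(last (node_coords k w) := r ! last (node_coords k w))"
    using fchildren_kill_batchE[OF assms(1)] by metis
  then show ?thesis by (intro bexI[of _ "last (node_coords k w)"]) (simp_all add: node_coords_snoc)
qed

lemma covered_step:
  assumes valid: "valid_kills k ks" and "covered k lab ks c" "gks_serves k c r"
  shows "covered k (relabel k lab ks r) (ks @ kill_batch k lab ks r) c"
proof -
  obtain w where w: "w \<in> alive_after k ks" "\<forall>i \<in> set (node_coords k w). c ! i = lab w i"
    using assms(2) by (auto simp: covered_def)
  then have w_old: "w \<in> ever_alive k ks" using alive_subset_ever_alive[OF valid] by blast
  show ?thesis
  proof (cases "node_fails k lab w r")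
    case False
    then have "w \<in> alive_after k (ks @ kill_batch k lab ks r)"
      using w by (simp add: alive_after_kill_batch[OF valid] kill_batch[OF valid])
    moreover have "relabel k lab ks r w = lab w" by (rule relabel_ever_alive[OF valid w_old])
    ultimately show ?thesis using w(2) unfolding covered_def by metis
  next
    case True
    then have killed: "w \<in> set (kill_batch k lab ks r)" using w by (simp add: kill_batch[OF valid])
    obtain i where i: "i < k" "c ! i = r ! i" using assms(3) by (auto simp: gks_serves_def)
    with True w have "i \<notin> set (node_coords k w)" by (auto simp: node_fails_def)
    moreover have "w \<in> ftree k" using w_old ever_alive_subset_ftree[OF valid] by blast
    ultimately obtain a where a: "a < k - length w" "node_coords k (w @ [a]) = node_coords k w @ [i]"
      using free_coord_child i(1) by metis
    then have "w @ [a] \<in> fchildren_set k (set (kill_batch k lab ks r))"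
      using killed by (simp add: mem_fchildren_set_iff)
    then have "w @ [a] \<in> alive_after k (ks @ kill_batch k lab ks r)"
      by (simp add: alive_after_kill_batch[OF valid])
    moreover have "relabel k lab ks r (w @ [a]) = (lab w)(i := r ! i)"
      using killed a by (simp add: relabel_def)
    ultimately show ?thesis
      using w i a by (auto simp: covered_def intro!: bexI[of _ "w @ [a]"])
  qed
qed

lemma covered_Nil: "covered k lab [] c"
  by (simp add: covered_def)

lemma phase_inv_Nil: "phase_inv k n lab []"
  by (simp add: phase_inv_def prefix_consistent_def ever_alive_def fchildren_set_def)

lemma not_phase_ends_if_covered:
  "valid_kills k ks \<Longrightarrow> covered k lab ks c \<Longrightarrow> gks_serves k c r \<Longrightarrow> \<not> phase_ends k lab ks r"
  using covered_step by (fastforce simp: covered_def phase_ends_def)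

lemma not_phase_ends_Nil:
  assumes "k \<ge> 1"
  shows "\<not> phase_ends k lab [] r"
proof -
  have "gks_serves k r r" using assms by (auto simp: gks_serves_def intro: exI[of _ 0])
  then show ?thesis by (rule not_phase_ends_if_covered[OF valid_kills_Nil covered_Nil])
qed

lemma covered_if_gks_dist_eq_0:
  assumes "valid_kills k ks" "covered k lab ks c" "gks_dist k c c' = 0"
  shows "covered k lab ks c'"
proof -
  obtain w where w: "w \<in> alive_after k ks" "\<forall>i \<in> set (node_coords k w). c ! i = lab w i"
    using assms(2) by (auto simp: covered_def)
  then have "w \<in> ftree k" using alive_after_subset_ftree[OF assms(1)] by blast
  then have "\<forall>i \<in> set (node_coords k w). c' ! i = lab w i"
    using w(2) assms(3) node_coords_lessThan by (fastforce simp: gks_dist_def)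
  with w(1) show ?thesis by (auto simp: covered_def)
qed

lemma gks_point_node_config:
  assumes "phase_inv k n lab ks" "w \<in> ever_alive k ks" "gks_point k n b"
  shows "gks_point k n (node_config k b lab w)"
  using assms by (auto simp: gks_point_def phase_inv_def nth_node_config)


lemma hydra_run_append:
  "hydra_run H past ps (K @ vs) = bind_pmf (hydra_run H past ps K)
     (\<lambda>X. map_pmf (\<lambda>Y. X @ Y) (hydra_run H (past @ K) (ps @ X) vs))"
proof (induction K arbitrary: past ps)
  case Nil
  have "map_pmf ((@) []) (hydra_run H past ps vs) = hydra_run H past ps vs"
    by (rule map_pmf_idI) simp
  then show ?case by (simp add: bind_return_pmf)
next
  case (Cons v K)
  then show ?case
    by (auto simp: bind_assoc_pmf bind_map_pmf map_bind_pmf map_pmf_comp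
        intro!: bind_pmf_cong map_pmf_cong)
qed

lemma length_hydra_run: "X \<in> set_pmf (hydra_run H past ps K) \<Longrightarrow> length X = length K"
  by (induction K arbitrary: past ps X) (auto split: if_splits)

lemma hydra_run_take:
  "map_pmf (take (length K)) (hydra_run H past ps (K @ M)) = hydra_run H past ps K"
proof -
  have "map_pmf (take (length K)) (hydra_run H past ps (K @ M))
      = bind_pmf (hydra_run H past ps K) return_pmf"
    by (auto simp: hydra_run_append map_bind_pmf map_pmf_comp length_hydra_run
        intro!: bind_pmf_cong)
  then show ?thesis by (simp add: bind_return_pmf')
qed

lemma alive_after_snoc_nonempty:
  assumes "valid_kills k (ks @ v # K)" "alive_after k (ks @ v # K) \<noteq> {}"
  shows "alive_after k (ks @ [v]) \<noteq> {}"
proof (cases K)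
  case (Cons u K')
  with valid_kills_append_hd[of k "ks @ [v]" K] assms(1) show ?thesis by auto
qed (use assms in simp)

lemma hydra_run_support:
  assumes H: "valid_hydra_alg k H"
  shows "valid_kills k (past @ K) \<Longrightarrow> alive_after k (past @ K) \<noteq> {} \<Longrightarrow> ps \<noteq> [] \<Longrightarrow>
    last ps \<in> alive_after k past \<Longrightarrow> X \<in> set_pmf (hydra_run H past ps K) \<Longrightarrow>
    set X \<subseteq> ever_alive k (past @ K) \<and> last (ps @ X) \<in> alive_after k (past @ K)"
proof (induction K arbitrary: past ps X)
  case (Cons v K)
  have valid: "valid_kills k (past @ [v])"
    using Cons.prems(1) valid_kills_appendD[of k "past @ [v]" K] by simp
  have alive: "alive_after k (past @ [v]) \<noteq> {}"
    using alive_after_snoc_nonempty Cons.prems(1,2) by blast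
  obtain p Y where X: "X = p # Y" and p: "p \<in> alive_after k (past @ [v])"
    and Y: "Y \<in> set_pmf (hydra_run H (past @ [v]) (ps @ [p]) K)"
  proof (cases "v = last ps")
    case True
    with Cons.prems(5) obtain p Y where "X = p # Y" "p \<in> set_pmf (H (past @ [v]) ps)"
      "Y \<in> set_pmf (hydra_run H (past @ [v]) (ps @ [p]) K)" by auto
    with H valid alive show ?thesis
      by (intro that) (auto simp: valid_hydra_alg_def)
  next
    case False
    with Cons.prems(5) obtain Y where "X = last ps # Y"
      "Y \<in> set_pmf (hydra_run H (past @ [v]) (ps @ [last ps]) K)" by auto
    with False Cons.prems(4) show ?thesis
      by (intro that) (auto simp: alive_after_snoc)
  qed
  have "set Y \<subseteq> ever_alive k (past @ v # K) \<and> last (ps @ X) \<in> alive_after k (past @ v # K)"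
    using Cons.IH[of "past @ [v]" "ps @ [p]" Y] Cons.prems(1,2) p Y X by simp
  moreover have "p \<in> ever_alive k (past @ v # K)"
    using p alive_subset_ever_alive[OF valid] ever_alive_mono[of k "past @ [v]" K] by auto
  ultimately show ?case using X by simp
qed simp

lemma path_cost_Cons_Cons: "path_cost d (a # b # xs) = d a b + path_cost d (b # xs)"
  by (simp add: path_cost_def)

lemma path_cost_singleton [simp]: "path_cost d [a] = 0"
  by (simp add: path_cost_def)

lemma path_cost_append:
  "path_cost d (a # X @ Y) = path_cost d (a # X) + path_cost d (last (a # X) # Y)"
  by (induction X arbitrary: a) (simp_all add: path_cost_Cons_Cons)

lemma path_cost_take_le: "path_cost d (a # take m X) \<le> path_cost d (a # X)"
  using path_cost_append[of d a "take m X" "drop m X"] by simp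

lemma path_cost_le:
  "(\<And>x y. x \<in> set (a # xs) \<Longrightarrow> y \<in> set (a # xs) \<Longrightarrow> d x y \<le> B) \<Longrightarrow>
     path_cost d (a # xs) \<le> B * length xs"
proof (induction xs arbitrary: a)
  case (Cons b xs)
  then have "d a b + path_cost d (b # xs) \<le> B + B * length xs"
    by (intro add_mono) auto
  then show ?case by (simp add: path_cost_Cons_Cons)
qed simp

lemma gks_dist_node_config_le_path_cost:
  assumes "prefix_consistent k lab C" "u \<in> C" "set X \<subseteq> C"
  shows "gks_dist k (node_config k b lab u) (node_config k b lab (last (u # X)))
           \<le> path_cost tdist (u # X)"
  using assms(2,3)
proof (induction X arbitrary: u)
  case (Cons v X)
  have "gks_dist k (node_config k b lab u) (node_config k b lab (last (v # X)))
      \<le> gks_dist k (node_config k b lab u) (node_config k b lab v)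
        + gks_dist k (node_config k b lab v) (node_config k b lab (last (v # X)))"
    by (rule gks_dist_triangle)
  also have "\<dots> \<le> tdist u v + path_cost tdist (v # X)"
    using Cons gks_dist_node_config_le_tdist[OF assms(1)] by (intro add_mono) auto
  finally show ?case by (simp add: path_cost_Cons_Cons)
qed (simp add: gks_dist_def)


section \<open>Online algorithms with a hidden state\<close>

fun state_run :: "('s \<Rightarrow> 'r \<Rightarrow> 's pmf) \<Rightarrow> ('s \<Rightarrow> 'c) \<Rightarrow> 's \<Rightarrow> 'r list \<Rightarrow> 'c list pmf" where
  "state_run st out s [] = return_pmf []"
| "state_run st out s (r # rs) =
     bind_pmf (st s r) (\<lambda>s'. map_pmf (\<lambda>cs. out s' # cs) (state_run st out s' rs))"

definition belief :: "('s \<Rightarrow> 'r \<Rightarrow> 's pmf) \<Rightarrow> ('s \<Rightarrow> 'c) \<Rightarrow> 's \<Rightarrow> 'r list \<Rightarrow> 'c list \<Rightarrow> 's pmf" where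
  "belief st out s0 rs cs = foldl (\<lambda>B (r, c). cond_pmf (bind_pmf B (\<lambda>s. st s r)) {s'. out s' = c})
     (return_pmf s0) (zip rs (tl cs))"

text \<open>The fallback return_pmf (last rs) only makes the algorithm valid on every history;
  on the histories that actually occur the first branch is taken.\<close>

definition history_alg ::
  "nat \<Rightarrow> (nat \<Rightarrow> nat) \<Rightarrow> ('s \<Rightarrow> nat list \<Rightarrow> 's pmf) \<Rightarrow> ('s \<Rightarrow> nat list) \<Rightarrow> 's \<Rightarrow> gks_alg" where
  "history_alg k n st out s0 rs cs =
     (let p = map_pmf out (bind_pmf (belief st out s0 (butlast rs) cs) (\<lambda>s. st s (last rs)))
      in if set_pmf p \<subseteq> {c. gks_point k n c \<and> gks_serves k c (last rs)} then p
         else return_pmf (last rs))"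

lemma valid_history_alg:
  assumes "k \<ge> 1"
  shows "valid_gks_alg k n (history_alg k n st out s0)"
proof -
  have "gks_serves k r r" for r :: "nat list"
    using assms by (auto simp: gks_serves_def intro: exI[of _ 0])
  then show ?thesis by (auto simp: valid_gks_alg_def history_alg_def Let_def)
qed

lemma belief_snoc:
  assumes "length cs = Suc (length rs)"
  shows "belief st out s0 (rs @ [r]) (cs @ [c]) =
     cond_pmf (bind_pmf (belief st out s0 rs cs) (\<lambda>s. st s r)) {s'. out s' = c}"
proof -
  have "zip (rs @ [r]) (tl (cs @ [c])) = zip rs (tl cs) @ [(r, c)]"
    using assms by (cases cs) simp_all
  then show ?thesis by (simp add: belief_def)
qed

lemma bind_cond_pmf_fibres: "bind_pmf p (\<lambda>x. cond_pmf p {y. f y = f x}) = p"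
  by (rule bind_cond_pmf_cancel) (auto intro: arg_cong[where f = "measure_pmf.prob p"])

text \<open>Resampling the state from its conditional distribution given the output does not
  change the distribution of future outputs.\<close>

lemma bind_cond_pmf_fibres_Cons:
  "bind_pmf p (\<lambda>x. map_pmf (\<lambda>ys. f x # ys) (bind_pmf (cond_pmf p {y. f y = f x}) g))
     = bind_pmf p (\<lambda>x. map_pmf (\<lambda>ys. f x # ys) (g x))"
proof -
  have fibre: "set_pmf (cond_pmf p {y. f y = f x}) = {y \<in> set_pmf p. f y = f x}"
    if "x \<in> set_pmf p" for x
    using that by (subst set_cond_pmf) auto
  have "bind_pmf p (\<lambda>x. map_pmf (\<lambda>ys. f x # ys) (bind_pmf (cond_pmf p {y. f y = f x}) g))
      = bind_pmf p (\<lambda>x. bind_pmf (cond_pmf p {y. f y = f x}) (\<lambda>y. map_pmf (\<lambda>ys. f y # ys) (g y)))"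
    by (intro bind_pmf_cong refl) (auto simp: map_bind_pmf fibre intro!: bind_pmf_cong)
  also have "\<dots> = bind_pmf p (\<lambda>x. map_pmf (\<lambda>ys. f x # ys) (g x))"
    by (simp add: bind_assoc_pmf[symmetric] bind_cond_pmf_fibres)
  finally show ?thesis .
qed

lemma gks_run_history_alg:
  assumes step: "\<And>s r s'. P s \<Longrightarrow> gks_point k n r \<Longrightarrow> s' \<in> set_pmf (st s r) \<Longrightarrow>
      P s' \<and> gks_point k n (out s') \<and> gks_serves k (out s') r"
  shows "length cs = Suc (length past) \<Longrightarrow> \<forall>s \<in> set_pmf (belief st out s0 past cs). P s \<Longrightarrow>
    \<forall>r \<in> set rs. gks_point k n r \<Longrightarrow>
    gks_run (history_alg k n st out s0) past cs rs
      = bind_pmf (belief st out s0 past cs) (\<lambda>s. state_run st out s rs)"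
proof (induction rs arbitrary: past cs)
  case (Cons r rs)
  let ?N = "bind_pmf (belief st out s0 past cs) (\<lambda>s. st s r)"
  have N: "P s' \<and> gks_point k n (out s') \<and> gks_serves k (out s') r" if "s' \<in> set_pmf ?N" for s'
    using that Cons.prems(2,3) step by auto
  then have alg: "history_alg k n st out s0 (past @ [r]) cs = map_pmf out ?N"
    by (auto simp: history_alg_def Let_def)
  have IH: "gks_run (history_alg k n st out s0) (past @ [r]) (cs @ [out s']) rs
      = bind_pmf (cond_pmf ?N {t. out t = out s'}) (\<lambda>t. state_run st out t rs)"
    if "s' \<in> set_pmf ?N" for s'
  proof -
    have "\<forall>t \<in> set_pmf (cond_pmf ?N {t. out t = out s'}). P t"
      using that N by (subst set_cond_pmf) auto
    then show ?thesis
      using Cons.prems Cons.IH[of "cs @ [out s']" "past @ [r]"] by (simp add: belief_snoc)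
  qed
  have "gks_run (history_alg k n st out s0) past cs (r # rs) = bind_pmf ?N (\<lambda>s'.
      map_pmf (\<lambda>x. out s' # x) (bind_pmf (cond_pmf ?N {t. out t = out s'}) (\<lambda>t. state_run st out t rs)))"
    by (auto simp: alg bind_map_pmf IH intro!: bind_pmf_cong)
  also have "\<dots> = bind_pmf (belief st out s0 past cs) (\<lambda>s. state_run st out s (r # rs))"
    by (simp add: bind_cond_pmf_fibres_Cons bind_assoc_pmf)
  finally show ?case .
qed simp

lemma gks_run_history_alg_Nil:
  assumes "\<And>s r s'. P s \<Longrightarrow> gks_point k n r \<Longrightarrow> s' \<in> set_pmf (st s r) \<Longrightarrow>
      P s' \<and> gks_point k n (out s') \<and> gks_serves k (out s') r"
    and "P s0" "\<forall>r \<in> set rs. gks_point k n r"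
  shows "gks_run (history_alg k n st out s0) [] [c0] rs = state_run st out s0 rs"
  using gks_run_history_alg[of P k n st out "[c0]" "[]" s0 rs] assms
  by (simp add: belief_def bind_return_pmf)

lemma length_state_run: "cs \<in> set_pmf (state_run st out s rs) \<Longrightarrow> length cs = length rs"
  by (induction rs arbitrary: s cs) auto


section \<open>The simulation\<close>

text \<open>A state consists of the configuration at the start of the phase, the labels, the kills
  of the phase so far and the positions of the Hydra algorithm in the phase.\<close>

type_synonym sim_state = "nat list \<times> (nat list \<Rightarrow> nat \<Rightarrow> nat) \<times> nat list list \<times> nat list list"

fun phase_step :: "nat \<Rightarrow> hydra_alg \<Rightarrow> sim_state \<Rightarrow> nat list \<Rightarrow> sim_state pmf" where
  "phase_step k H (b, lab, ks, ps) r =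
     map_pmf (\<lambda>X. (b, relabel k lab ks r, ks @ kill_batch k lab ks r, ps @ X))
       (hydra_run H ks ps (kill_batch k lab ks r))"

fun sim_step :: "nat \<Rightarrow> hydra_alg \<Rightarrow> sim_state \<Rightarrow> nat list \<Rightarrow> sim_state pmf" where
  "sim_step k H (b, lab, ks, ps) r =
     (if phase_ends k lab ks r then phase_step k H (node_config k b lab (last ps), lab, [], [[]]) r
      else phase_step k H (b, lab, ks, ps) r)"

fun sim_config :: "nat \<Rightarrow> sim_state \<Rightarrow> nat list" where
  "sim_config k (b, lab, ks, ps) = node_config k b lab (last ps)"

fun sim_inv :: "nat \<Rightarrow> (nat \<Rightarrow> nat) \<Rightarrow> sim_state \<Rightarrow> bool" where
  "sim_inv k n (b, lab, ks, ps) =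
     (phase_inv k n lab ks \<and> gks_point k n b \<and> ps \<noteq> [] \<and> last ps \<in> alive_after k ks)"

definition sim_alg :: "nat \<Rightarrow> (nat \<Rightarrow> nat) \<Rightarrow> hydra_alg \<Rightarrow> nat list \<Rightarrow> gks_alg" where
  "sim_alg k n H c0 = history_alg k n (sim_step k H) (sim_config k) (c0, \<lambda>_ _. 0, [], [[]])"

lemma phase_step_inv:
  assumes H: "valid_hydra_alg k H" and inv: "sim_inv k n (b, lab, ks, ps)"
    and r: "gks_point k n r" and go_on: "\<not> phase_ends k lab ks r"
    and s': "s' \<in> set_pmf (phase_step k H (b, lab, ks, ps) r)"
  shows "sim_inv k n s' \<and> gks_point k n (sim_config k s') \<and> gks_serves k (sim_config k s') r"
proof -
  let ?K = "kill_batch k lab ks r" and ?lab = "relabel k lab ks r"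
  obtain X where X: "X \<in> set_pmf (hydra_run H ks ps ?K)" and s'_eq: "s' = (b, ?lab, ks @ ?K, ps @ X)"
    using s' by auto
  have valid: "valid_kills k ks" using inv by (simp add: phase_inv_def)
  have inv': "phase_inv k n ?lab (ks @ ?K)" using phase_inv_step inv r go_on by simp
  then have valid': "valid_kills k (ks @ ?K)" "alive_after k (ks @ ?K) \<noteq> {}"
    by (simp_all add: phase_inv_def)
  let ?w = "last (ps @ X)"
  have w: "?w \<in> alive_after k (ks @ ?K)"
    using hydra_run_support[OF H valid' _ _ X] inv by simp
  then have "?w \<in> ever_alive k (ks @ ?K)" using alive_subset_ever_alive[OF valid'(1)] by blast
  then have point: "gks_point k n (node_config k b ?lab ?w)"
    using gks_point_node_config[OF inv'] inv by simp
  obtain i where i: "i \<in> set (node_coords k ?w)" "?lab ?w i = r ! i"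
    using alive_after_kill_batch_serves[OF valid w] by blast
  moreover have "i < k"
    using i(1) w alive_after_subset_ftree[OF valid'(1)] node_coords_lessThan by blast
  ultimately have "gks_serves k (node_config k b ?lab ?w) r"
    by (auto simp: gks_serves_def nth_node_config)
  with point inv inv' w show ?thesis by (simp add: s'_eq)
qed

lemma sim_inv_restart:
  assumes "sim_inv k n (b, lab, ks, ps)"
  shows "sim_inv k n (node_config k b lab (last ps), lab, [], [[]])"
proof -
  have "last ps \<in> ever_alive k ks"
    using assms alive_subset_ever_alive by (auto simp: phase_inv_def)
  with assms gks_point_node_config[of k n lab ks "last ps" b] show ?thesis
    by (simp add: phase_inv_Nil)
qed

lemma sim_config_restart: "gks_point k n b \<Longrightarrow> sim_config k (b, lab, [], [[]]) = b"
  by (simp add: node_config_Nil gks_point_def)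

lemma sim_step_inv:
  assumes "valid_hydra_alg k H" "k \<ge> 1" "sim_inv k n s" "gks_point k n r"
    and "s' \<in> set_pmf (sim_step k H s r)"
  shows "sim_inv k n s' \<and> gks_point k n (sim_config k s') \<and> gks_serves k (sim_config k s') r"
proof -
  obtain b lab ks ps where s: "s = (b, lab, ks, ps)" by (cases s) auto
  show ?thesis
  proof (cases "phase_ends k lab ks r")
    case True
    have "sim_inv k n (node_config k b lab (last ps), lab, [], [[]])"
      using assms(3) s sim_inv_restart[of k n b lab ks ps] by simp
    moreover have "s' \<in> set_pmf (phase_step k H (node_config k b lab (last ps), lab, [], [[]]) r)"
      using assms(5) s True by simp
    ultimately show ?thesis
      using phase_step_inv[OF assms(1) _ assms(4) not_phase_ends_Nil[OF assms(2)]] by blast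
  next
    case False
    with assms s show ?thesis using phase_step_inv[OF assms(1) _ assms(4)] by auto
  qed
qed

lemma valid_sim_alg: "k \<ge> 1 \<Longrightarrow> valid_gks_alg k n (sim_alg k n H c0)"
  unfolding sim_alg_def by (rule valid_history_alg)

lemma gks_run_sim_alg:
  assumes "valid_hydra_alg k H" "k \<ge> 1" "gks_point k n c0" "\<forall>r \<in> set I. gks_point k n r"
  shows "gks_run (sim_alg k n H c0) [] [c0] I
    = state_run (sim_step k H) (sim_config k) (c0, \<lambda>_ _. 0, [], [[]]) I"
  unfolding sim_alg_def
  by (rule gks_run_history_alg_Nil[where P = "sim_inv k n"])
     (use assms sim_step_inv phase_inv_Nil in auto)


definition sim_cost :: "nat \<Rightarrow> hydra_alg \<Rightarrow> sim_state \<Rightarrow> nat list list \<Rightarrow> ennreal" where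
  "sim_cost k H s I = (\<integral>\<^sup>+ cs. of_nat (path_cost (gks_dist k) (sim_config k s # cs))
     \<partial>measure_pmf (state_run (sim_step k H) (sim_config k) s I))"

definition hydra_cost :: "hydra_alg \<Rightarrow> nat list list \<Rightarrow> nat list list \<Rightarrow> nat list list \<Rightarrow> ennreal" where
  "hydra_cost H ks ps K =
     (\<integral>\<^sup>+ X. of_nat (path_cost tdist (last ps # X)) \<partial>measure_pmf (hydra_run H ks ps K))"

fun phase_kills ::
  "nat \<Rightarrow> (nat list \<Rightarrow> nat \<Rightarrow> nat) \<Rightarrow> nat list list \<Rightarrow> nat list list \<Rightarrow> nat list list" where
  "phase_kills k lab ks [] = []"
| "phase_kills k lab ks (r # I) = (if phase_ends k lab ks r then []
     else kill_batch k lab ks r @ phase_kills k (relabel k lab ks r) (ks @ kill_batch k lab ks r) I)"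

fun phase_restarts :: "nat \<Rightarrow> (nat list \<Rightarrow> nat \<Rightarrow> nat) \<Rightarrow> nat list list \<Rightarrow> nat list list \<Rightarrow> nat" where
  "phase_restarts k lab ks [] = 0"
| "phase_restarts k lab ks (r # I) = (if phase_ends k lab ks r
     then Suc (phase_restarts k (relabel k lab [] r) (kill_batch k lab [] r) I)
     else phase_restarts k (relabel k lab ks r) (ks @ kill_batch k lab ks r) I)"

lemma nn_integral_pmf_add_const:
  "(\<integral>\<^sup>+ x. f x + c \<partial>measure_pmf p) = (\<integral>\<^sup>+ x. f x \<partial>measure_pmf p) + c"
  by (subst nn_integral_add) (simp_all add: measure_pmf.emeasure_space_1)

lemma nn_integral_pmf_const_add:
  "(\<integral>\<^sup>+ x. c + f x \<partial>measure_pmf p) = c + (\<integral>\<^sup>+ x. f x \<partial>measure_pmf p)"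
  using nn_integral_pmf_add_const[where f = f and c = c and p = p] by (simp add: add.commute)

lemma nn_integral_pmf_mono:
  "(\<And>x. x \<in> set_pmf p \<Longrightarrow> f x \<le> g x) \<Longrightarrow>
     (\<integral>\<^sup>+ x. f x \<partial>measure_pmf p) \<le> (\<integral>\<^sup>+ x. g x \<partial>measure_pmf p)"
  by (rule nn_integral_mono_AE) (simp add: AE_measure_pmf_iff)

lemma sim_cost_Cons:
  "sim_cost k H s (r # I) = (\<integral>\<^sup>+ s'. of_nat (gks_dist k (sim_config k s) (sim_config k s'))
     + sim_cost k H s' I \<partial>measure_pmf (sim_step k H s r))"
  by (simp add: sim_cost_def path_cost_Cons_Cons nn_integral_pmf_const_add)

lemma hydra_cost_append:
  assumes "ps \<noteq> []"
  shows "hydra_cost H ks ps (K @ L) = (\<integral>\<^sup>+ X. of_nat (path_cost tdist (last ps # X))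
     + hydra_cost H (ks @ K) (ps @ X) L \<partial>measure_pmf (hydra_run H ks ps K))"
proof -
  have "last (ps @ X) = last (last ps # X)" for X
    using assms by (cases X rule: rev_cases) auto
  then show ?thesis
    by (simp add: hydra_cost_def hydra_run_append path_cost_append
        flip: nn_integral_pmf_const_add)
qed

lemma phase_step_move_le:
  assumes H: "valid_hydra_alg k H" and inv: "sim_inv k n (b, lab, ks, ps)"
    and r: "gks_point k n r" and go_on: "\<not> phase_ends k lab ks r"
    and X: "X \<in> set_pmf (hydra_run H ks ps (kill_batch k lab ks r))"
  shows "gks_dist k (node_config k b lab (last ps)) (node_config k b (relabel k lab ks r) (last (ps @ X)))
      \<le> path_cost tdist (last ps # X)"
proof -
  let ?K = "kill_batch k lab ks r"
  have valid: "valid_kills k ks" using inv by (simp add: phase_inv_def)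
  have inv': "phase_inv k n (relabel k lab ks r) (ks @ ?K)" using phase_inv_step inv r go_on by simp
  then have valid': "valid_kills k (ks @ ?K)" "alive_after k (ks @ ?K) \<noteq> {}"
    by (simp_all add: phase_inv_def)
  have old: "last ps \<in> ever_alive k ks" using inv alive_subset_ever_alive[OF valid] by auto
  have "set X \<subseteq> ever_alive k (ks @ ?K)"
    using hydra_run_support[OF H valid' _ _ X] inv by simp
  moreover have "last ps \<in> ever_alive k (ks @ ?K)" using old ever_alive_mono by blast
  moreover have "prefix_consistent k (relabel k lab ks r) (ever_alive k (ks @ ?K))"
    using inv' by (simp add: phase_inv_def)
  ultimately have "gks_dist k (node_config k b (relabel k lab ks r) (last ps))
      (node_config k b (relabel k lab ks r) (last (last ps # X))) \<le> path_cost tdist (last ps # X)"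
    using gks_dist_node_config_le_path_cost by blast
  moreover have "node_config k b lab (last ps) = node_config k b (relabel k lab ks r) (last ps)"
    by (simp add: node_config_def relabel_ever_alive[OF valid old])
  moreover have "last (ps @ X) = last (last ps # X)"
    using inv by (cases X rule: rev_cases) auto
  ultimately show ?thesis by simp
qed

lemma phase_step_cost:
  assumes H: "valid_hydra_alg k H" and inv: "sim_inv k n (b, lab, ks, ps)"
    and r: "gks_point k n r" and go_on: "\<not> phase_ends k lab ks r"
    and IH: "\<And>X. sim_inv k n (b, relabel k lab ks r, ks @ kill_batch k lab ks r, ps @ X) \<Longrightarrow>
       sim_cost k H (b, relabel k lab ks r, ks @ kill_batch k lab ks r, ps @ X) I
         \<le> hydra_cost H (ks @ kill_batch k lab ks r) (ps @ X) L + c"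
  shows "(\<integral>\<^sup>+ s'. of_nat (gks_dist k (node_config k b lab (last ps)) (sim_config k s'))
      + sim_cost k H s' I \<partial>measure_pmf (phase_step k H (b, lab, ks, ps) r))
    \<le> hydra_cost H ks ps (kill_batch k lab ks r @ L) + c"
proof -
  let ?K = "kill_batch k lab ks r" and ?lab = "relabel k lab ks r"
  have "(\<integral>\<^sup>+ s'. of_nat (gks_dist k (node_config k b lab (last ps)) (sim_config k s'))
      + sim_cost k H s' I \<partial>measure_pmf (phase_step k H (b, lab, ks, ps) r))
    = (\<integral>\<^sup>+ X. of_nat (gks_dist k (node_config k b lab (last ps)) (node_config k b ?lab (last (ps @ X))))
      + sim_cost k H (b, ?lab, ks @ ?K, ps @ X) I \<partial>measure_pmf (hydra_run H ks ps ?K))"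
    by simp
  also have "\<dots> \<le> (\<integral>\<^sup>+ X. of_nat (path_cost tdist (last ps # X)) + hydra_cost H (ks @ ?K) (ps @ X) L + c
      \<partial>measure_pmf (hydra_run H ks ps ?K))"
  proof (rule nn_integral_pmf_mono)
    fix X assume X: "X \<in> set_pmf (hydra_run H ks ps ?K)"
    then have "sim_inv k n (b, ?lab, ks @ ?K, ps @ X)"
      using phase_step_inv[OF H inv r go_on, of "(b, ?lab, ks @ ?K, ps @ X)"] by auto
    with phase_step_move_le[OF H inv r go_on X] IH
    show "of_nat (gks_dist k (node_config k b lab (last ps)) (node_config k b ?lab (last (ps @ X))))
        + sim_cost k H (b, ?lab, ks @ ?K, ps @ X) I
      \<le> of_nat (path_cost tdist (last ps # X)) + hydra_cost H (ks @ ?K) (ps @ X) L + c"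
      by (auto simp: add.assoc intro!: add_mono)
  qed
  also have "\<dots> = hydra_cost H ks ps (?K @ L) + c"
    using inv by (simp add: nn_integral_pmf_add_const hydra_cost_append)
  finally show ?thesis .
qed

lemma sim_cost_le:
  assumes H: "valid_hydra_alg k H" and k: "k \<ge> 1"
    and phase: "\<And>lab I. \<forall>r \<in> set I. gks_point k n r \<Longrightarrow>
       hydra_cost H [] [[]] (phase_kills k lab [] I) \<le> ennreal R"
  shows "sim_inv k n (b, lab, ks, ps) \<Longrightarrow> \<forall>r \<in> set I. gks_point k n r \<Longrightarrow>
    sim_cost k H (b, lab, ks, ps) I
      \<le> hydra_cost H ks ps (phase_kills k lab ks I) + ennreal R * of_nat (phase_restarts k lab ks I)"
proof (induction I arbitrary: b lab ks ps)
  case Nil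
  then show ?case by (simp add: sim_cost_def)
next
  case (Cons r I)
  have r: "gks_point k n r" and I: "\<forall>r \<in> set I. gks_point k n r" using Cons.prems(2) by auto
  have step: "(\<integral>\<^sup>+ s'. of_nat (gks_dist k (node_config k b' lab' (last ps')) (sim_config k s'))
      + sim_cost k H s' I \<partial>measure_pmf (phase_step k H (b', lab', ks', ps') r))
    \<le> hydra_cost H ks' ps'
        (kill_batch k lab' ks' r @ phase_kills k (relabel k lab' ks' r) (ks' @ kill_batch k lab' ks' r) I)
      + ennreal R * of_nat (phase_restarts k (relabel k lab' ks' r) (ks' @ kill_batch k lab' ks' r) I)"
    if inv: "sim_inv k n (b', lab', ks', ps')" and go_on: "\<not> phase_ends k lab' ks' r"
    for b' lab' ks' ps'
    by (rule phase_step_cost[OF H inv r go_on]) (use Cons.IH I in blast)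
  show ?case
  proof (cases "phase_ends k lab ks r")
    case False
    with step[OF Cons.prems(1) False] show ?thesis by (simp add: sim_cost_Cons)
  next
    case True
    let ?b = "node_config k b lab (last ps)"
    have inv: "sim_inv k n (?b, lab, [], [[]])" by (rule sim_inv_restart[OF Cons.prems(1)])
    then have "node_config k ?b lab [] = ?b" by (simp add: node_config_Nil gks_point_def)
    with True step[OF inv not_phase_ends_Nil[OF k]] not_phase_ends_Nil[OF k, of lab r]
    have "sim_cost k H (b, lab, ks, ps) (r # I) \<le> hydra_cost H [] [[]] (phase_kills k lab [] (r # I))
        + ennreal R * of_nat (phase_restarts k (relabel k lab [] r) (kill_batch k lab [] r) I)"
      by (simp add: sim_cost_Cons)
    also have "\<dots> \<le> ennreal R * of_nat (phase_restarts k lab ks (r # I))"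
      using phase[OF Cons.prems(2)] True by (simp add: distrib_left add_right_mono)
    finally show ?thesis by (simp add: add_increasing)
  qed
qed

lemma phase_kills_valid:
  "phase_inv k n lab ks \<Longrightarrow> \<forall>r \<in> set I. gks_point k n r \<Longrightarrow>
    valid_kills k (ks @ phase_kills k lab ks I) \<and> alive_after k (ks @ phase_kills k lab ks I) \<noteq> {}"
proof (induction I arbitrary: lab ks)
  case (Cons r I)
  show ?case
  proof (cases "phase_ends k lab ks r")
    case False
    with Cons.prems have "phase_inv k n (relabel k lab ks r) (ks @ kill_batch k lab ks r)"
      using phase_inv_step by simp
    with Cons.IH[of "relabel k lab ks r" "ks @ kill_batch k lab ks r"] Cons.prems False
    show ?thesis by simp
  qed (use Cons.prems in \<open>simp add: phase_inv_def\<close>)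
qed (simp add: phase_inv_def)

lemma tdist_le: "u \<in> ftree k \<Longrightarrow> v \<in> ftree k \<Longrightarrow> tdist u v \<le> 2 * k"
  by (auto simp: tdist_def ftree_def)

lemma ennreal_hydra_exp_cost:
  assumes H: "valid_hydra_alg k H" and M: "hydra_adversary k M"
  shows "ennreal (hydra_exp_cost H M) = hydra_cost H [] [[]] M"
proof -
  have bound: "path_cost tdist ([] # Z) \<le> 2 * k * length M"
    if Z: "Z \<in> set_pmf (hydra_run H [] [[]] M)" for Z
  proof -
    have "set Z \<subseteq> ever_alive k M"
      using hydra_run_support[OF H, of "[]" M "[[]]" Z] hydra_adversary_alive[OF M] Z by simp
    then have "set ([] # Z) \<subseteq> ftree k"
      using ever_alive_subset_ftree[OF hydra_adversary_alive(1)[OF M]] by auto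
    then have "path_cost tdist ([] # Z) \<le> 2 * k * length Z"
      by (intro path_cost_le) (auto intro: tdist_le)
    then show ?thesis using length_hydra_run[OF Z] by simp
  qed
  have "integrable (measure_pmf (hydra_run H [] [[]] M)) (\<lambda>Z. real (path_cost tdist ([] # Z)))"
    by (rule measure_pmf.integrable_const_bound[where B = "real (2 * k * length M)"])
       (use bound in \<open>auto simp: AE_measure_pmf_iff simp del: of_nat_mult\<close>)
  then have "(\<integral>\<^sup>+ Z. ennreal (real (path_cost tdist ([] # Z))) \<partial>measure_pmf (hydra_run H [] [[]] M))
      = ennreal (hydra_exp_cost H M)"
    unfolding hydra_exp_cost_def by (rule nn_integral_eq_integral) simp
  then show ?thesis by (simp add: hydra_cost_def ennreal_of_nat_eq_real_of_nat)
qed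

lemma hydra_cost_phase_kills_le:
  assumes H: "valid_hydra_alg k H"
    and hyp: "\<forall>ks. hydra_adversary k ks \<longrightarrow> hydra_exp_cost H ks \<le> R"
    and I: "\<forall>r \<in> set I. gks_point k n r"
  shows "hydra_cost H [] [[]] (phase_kills k lab [] I) \<le> ennreal R"
proof -
  let ?L = "phase_kills k lab [] I"
  have "valid_kills k ?L" "alive_after k ?L \<noteq> {}"
    using phase_kills_valid[OF phase_inv_Nil I] by simp_all
  then obtain M where M: "hydra_adversary k (?L @ M)"
    using hydra_adversary_extension by blast
  have "hydra_cost H [] [[]] ?L = (\<integral>\<^sup>+ Z. of_nat (path_cost tdist ([] # take (length ?L) Z))
      \<partial>measure_pmf (hydra_run H [] [[]] (?L @ M)))"
    by (simp add: hydra_cost_def flip: hydra_run_take[of ?L H "[]" "[[]]" M])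
  also have "\<dots> \<le> hydra_cost H [] [[]] (?L @ M)"
    unfolding hydra_cost_def by (rule nn_integral_pmf_mono) (simp add: path_cost_take_le)
  also have "\<dots> = ennreal (hydra_exp_cost H (?L @ M))"
    by (rule ennreal_hydra_exp_cost[OF H M, symmetric])
  also have "\<dots> \<le> ennreal R" using hyp M by (simp add: ennreal_leI)
  finally show ?thesis .
qed

lemma hydra_cost_bound_nonneg:
  assumes "\<forall>ks. hydra_adversary k ks \<longrightarrow> hydra_exp_cost H ks \<le> R"
  shows "0 \<le> R"
proof -
  obtain M where "hydra_adversary k ([] @ M)"
    using hydra_adversary_extension[OF valid_kills_Nil] by fastforce
  moreover have "0 \<le> hydra_exp_cost H M"
    unfolding hydra_exp_cost_def by (rule integral_nonneg_AE) simp
  ultimately show ?thesis using assms by force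
qed

lemma gks_exp_cost_sim_alg_le:
  assumes H: "valid_hydra_alg k H" and k: "k \<ge> 1"
    and hyp: "\<forall>ks. hydra_adversary k ks \<longrightarrow> hydra_exp_cost H ks \<le> R"
    and c0: "gks_point k n c0" and I: "\<forall>r \<in> set I. gks_point k n r"
  shows "gks_exp_cost k (sim_alg k n H c0) c0 I \<le> R + R * real (phase_restarts k (\<lambda>_ _. 0) [] I)"
proof -
  let ?s0 = "(c0, \<lambda>_ _. 0, [], [[]]) :: sim_state" and ?m = "phase_restarts k (\<lambda>_ _. 0) [] I"
  let ?p = "state_run (sim_step k H) (sim_config k) ?s0 I"
  have R: "0 \<le> R" using hydra_cost_bound_nonneg[OF hyp] .
  have "path_cost (gks_dist k) (c0 # cs) \<le> k * length I" if "cs \<in> set_pmf ?p" for cs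
    using path_cost_le[of c0 cs "gks_dist k" k] gks_dist_le length_state_run[OF that] by simp
  then have "integrable ?p (\<lambda>cs. real (path_cost (gks_dist k) (c0 # cs)))"
    by (intro measure_pmf.integrable_const_bound[where B = "real (k * length I)"])
       (auto simp: AE_measure_pmf_iff simp del: of_nat_mult)
  then have "ennreal (gks_exp_cost k (sim_alg k n H c0) c0 I) = sim_cost k H ?s0 I"
    using sim_config_restart[OF c0]
    by (simp add: gks_exp_cost_def gks_run_sim_alg[OF H k c0 I] sim_cost_def
        nn_integral_eq_integral ennreal_of_nat_eq_real_of_nat)
  also have "\<dots> \<le> hydra_cost H [] [[]] (phase_kills k (\<lambda>_ _. 0) [] I) + ennreal R * of_nat ?m"
    by (rule sim_cost_le[OF H k hydra_cost_phase_kills_le[OF H hyp]]) (use c0 I phase_inv_Nil in simp_all)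
  also have "\<dots> \<le> ennreal R + ennreal R * of_nat ?m"
    using hydra_cost_phase_kills_le[OF H hyp I] by (rule add_right_mono)
  also have "\<dots> = ennreal (R + R * real ?m)"
    using R by (simp add: ennreal_plus ennreal_mult ennreal_of_nat_eq_real_of_nat)
  finally have "ennreal (gks_exp_cost k (sim_alg k n H c0) c0 I) \<le> ennreal (R + R * real ?m)" .
  moreover have "0 \<le> R + R * real ?m" using R by simp
  ultimately show ?thesis using ennreal_le_iff by blast
qed

section \<open>Comparison with the optimum\<close>

lemma phase_restarts_le_path_cost:
  assumes k: "k \<ge> 1"
  shows "phase_inv k n lab ks \<Longrightarrow> \<forall>r \<in> set I. gks_point k n r \<Longrightarrow> length cs = length I \<Longrightarrow>
    \<forall>j < length I. gks_serves k (cs ! j) (I ! j) \<Longrightarrow>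
    phase_restarts k lab ks I \<le> path_cost (gks_dist k) (c # cs) + of_bool (\<not> covered k lab ks c)"
proof (induction I arbitrary: lab ks cs c)
  case (Cons r I)
  obtain c1 cs' where cs: "cs = c1 # cs'" using Cons.prems(3) by (cases cs) auto
  have r: "gks_point k n r" and I: "\<forall>r \<in> set I. gks_point k n r" and len: "length cs' = length I"
    using Cons.prems(2,3) cs by auto
  have serves: "gks_serves k c1 r" using Cons.prems(4) cs by force
  have serves': "\<forall>j < length I. gks_serves k (cs' ! j) (I ! j)" using Cons.prems(4) cs by auto
  have valid: "valid_kills k ks" using Cons.prems(1) by (simp add: phase_inv_def)
  note stays = covered_if_gks_dist_eq_0[OF valid, where lab = lab and c = c and c' = c1]
  show ?case
  proof (cases "phase_ends k lab ks r")
    case True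
    have "phase_inv k n (relabel k lab [] r) (kill_batch k lab [] r)"
      using phase_inv_step[OF phase_inv_Nil r not_phase_ends_Nil[OF k]] by simp
    moreover have "covered k (relabel k lab [] r) (kill_batch k lab [] r) c1"
      using covered_step[OF valid_kills_Nil covered_Nil serves] by simp
    ultimately have "phase_restarts k (relabel k lab [] r) (kill_batch k lab [] r) I
        \<le> path_cost (gks_dist k) (c1 # cs')"
      using Cons.IH[OF _ I len serves', of _ _ c1] by fastforce
    moreover have "1 \<le> gks_dist k c c1 + of_bool (\<not> covered k lab ks c)"
      using stays not_phase_ends_if_covered[OF valid _ serves, where lab = lab] True by fastforce
    ultimately show ?thesis using True cs by (simp add: path_cost_Cons_Cons)
  next
    case False
    then have "phase_inv k n (relabel k lab ks r) (ks @ kill_batch k lab ks r)"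
      using phase_inv_step[OF Cons.prems(1) r] by blast
    then have "phase_restarts k (relabel k lab ks r) (ks @ kill_batch k lab ks r) I
        \<le> path_cost (gks_dist k) (c1 # cs')
          + of_bool (\<not> covered k (relabel k lab ks r) (ks @ kill_batch k lab ks r) c1)"
      using Cons.IH I len serves' by blast
    moreover have "of_bool (\<not> covered k (relabel k lab ks r) (ks @ kill_batch k lab ks r) c1)
        \<le> gks_dist k c c1 + of_bool (\<not> covered k lab ks c)"
      using stays covered_step[OF valid _ serves, where lab = lab] by fastforce
    ultimately show ?thesis using False cs by (simp add: path_cost_Cons_Cons)
  qed
qed simp

lemma phase_restarts_le_gks_opt:
  assumes "k \<ge> 1" "\<forall>r \<in> set I. gks_point k n r"
  shows "phase_restarts k lab [] I \<le> gks_opt k n c0 I"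
  unfolding gks_opt_def
proof (rule cINF_greatest)
  have "gks_serves k r r" for r :: "nat list"
    using assms(1) by (auto simp: gks_serves_def intro: exI[of _ 0])
  then have "I \<in> {cs. length cs = length I \<and>
      (\<forall>j < length I. gks_point k n (cs ! j) \<and> gks_serves k (cs ! j) (I ! j))}"
    using assms(2) by auto
  then show "{cs. length cs = length I \<and>
      (\<forall>j < length I. gks_point k n (cs ! j) \<and> gks_serves k (cs ! j) (I ! j))} \<noteq> {}"
    by blast
next
  fix cs assume "cs \<in> {cs. length cs = length I \<and>
      (\<forall>j < length I. gks_point k n (cs ! j) \<and> gks_serves k (cs ! j) (I ! j))}"
  then show "phase_restarts k lab [] I \<le> path_cost (gks_dist k) (c0 # cs)"
    using phase_restarts_le_path_cost[OF assms(1) phase_inv_Nil assms(2), of cs lab c0] covered_Nil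
    by simp
qed

theorem theorem6:
  fixes k :: nat and R :: real
  assumes "k \<ge> 1"
    and "\<exists>H. valid_hydra_alg k H \<and> (\<forall>ks. hydra_adversary k ks \<longrightarrow> hydra_exp_cost H ks \<le> R)"
  shows "\<forall>(n :: nat \<Rightarrow> nat) (c0 :: nat list).
           (\<forall>i < k. n i \<ge> 2) \<and> gks_point k n c0 \<longrightarrow>
           (\<exists>A. valid_gks_alg k n A \<and> gks_competitive k n c0 A (R + 1))"
proof (intro allI impI)
  fix n :: "nat \<Rightarrow> nat" and c0 :: "nat list"
  assume "(\<forall>i < k. n i \<ge> 2) \<and> gks_point k n c0"
  then have c0: "gks_point k n c0" by simp
  obtain H where H: "valid_hydra_alg k H"
    and hyp: "\<forall>ks. hydra_adversary k ks \<longrightarrow> hydra_exp_cost H ks \<le> R"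
    using assms(2) by blast
  have "gks_competitive k n c0 (sim_alg k n H c0) (R + 1)"
    unfolding gks_competitive_def
  proof (intro exI[of _ R] allI impI)
    fix I assume I: "\<forall>r \<in> set I. gks_point k n r"
    have "gks_exp_cost k (sim_alg k n H c0) c0 I \<le> R + R * real (phase_restarts k (\<lambda>_ _. 0) [] I)"
      by (rule gks_exp_cost_sim_alg_le[OF H assms(1) hyp c0 I])
    also have "\<dots> \<le> R + (R + 1) * real (gks_opt k n c0 I)"
      using phase_restarts_le_gks_opt[OF assms(1) I] hydra_cost_bound_nonneg[OF hyp]
      by (intro add_left_mono mult_mono) auto
    finally show "gks_exp_cost k (sim_alg k n H c0) c0 I \<le> (R + 1) * real (gks_opt k n c0 I) + R"
      by simp
  qed
  with valid_sim_alg[OF assms(1)] show "\<exists>A. valid_gks_alg k n A \<and> gks_competitive k n c0 A (R + 1)"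
    by blast
qed

end
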